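(* Let $(X_t)_{t\ge1}$ be a strictly stationary time series with continuous stationary distribution function $F$, and let $M_m=\max(X_1,\dots,X_m)$. Let $\gamma\in\mathbb{R}$, $\rho\le 0$, $\theta\in(0,1]$, and let $b(t)=Q(e^{-1/t})$ for $t>1$, where $Q$ is the generalized inverse of $F$. Assume that there exist a positive function $a(\cdot)$ and a function $A(\cdot)$ of eventually constant sign with $A(s)\to0$ as $s\to\infty$ such that for all $x>0$ $$\lim_{s\to\infty}\frac{1}{A(s)}\left(\frac{b(sx)-b(s)}{a(s)}-\int_1^x u^{\gamma-1}\,du\right)=\mathcal{H}_{\gamma,\rho}(x):=\int_1^x v^{\gamma-1}\int_1^v u^{\rho-1}\,du\,dv,$$ and that, for integer sequences $m=m_n\to\infty$ and $k=k_n\to\infty$, $\sqrt{k}A(m)\to\lambda\in\mathbb{R}$ as $n\to\infty$. Define $a_\theta(m)=a(m)\theta^\gamma$ and $b_\theta(m)=b(m)+a(m)(\theta^\gamma-1)/\gamma$ (with $(\theta^\gamma-1)/\gamma=\log\theta$ if $\gamma=0$). Then, as $n\to\infty$, $$\sqrt{k}\left(\frac{a_\theta(m)}{a(\theta m)}-1\right)=-\lambda\frac{\theta^\rho-1}{\rho}+o(1),$$ $$\sqrt{k}\,\frac{b_\theta(m)-b(\theta m)}{a(\theta m)}=\lambda\theta^\rho\mathcal{H}_{\gamma,\rho}(\theta^{-1})+\lambda\frac{\theta^\rho-1}{\rho}\,\frac{\theta^{-\gamma}-1}{\gamma}+o(1),$$ (with $(\theta^\rho-1)/\rho=\log\theta$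 if $\rho=0$). Moreover, if in addition $\lim_{m\to\infty}\mathbb{P}(M_m\le a_\theta(m)z+b_\theta(m))=G_\gamma(z)$ for all $z$ (which holds when $F$ is in the max-domain of attraction of $G_\gamma$ and the series has extremal index $\theta$), then for all $z$, $$\lim_{n\to\infty}\mathbb{P}\big(M_m\le a(\theta m)z+b(\theta m)\big)=G_\gamma(z).$$
   Context: $G_\gamma(z)=\exp(-(1+\gamma z)_+^{-1/\gamma})$ is the generalized extreme value (GEV) distribution function ($G_0(z)=\exp(-e^{-z})$), with $(x)_+=\max(0,x)$. The generalized inverse is $Q(\tau)=\inf\{x: F(x)\ge\tau\}$. A series has extremal index $\theta\in(0,1]$ if for every $x>0$ and every sequence $u_m$ with $m(1-F(u_m))\to x$ one has $\mathbb{P}(M_m\le u_m)\to e^{-\theta x}$. *)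

theory Defs
  imports "HOL-Probability.Probability"
begin

definition boxcox :: "real \<Rightarrow> real \<Rightarrow> real" where
  "boxcox g x = (if g = 0 then ln x else (x powr g - 1) / g)"

definition H2 :: "real \<Rightarrow> real \<Rightarrow> real \<Rightarrow> real" where
  "H2 g r x = (LBINT v=ereal 1..ereal x. v powr (g - 1) * (LBINT u=ereal 1..ereal v. u powr (r - 1)))"

definition GEV :: "real \<Rightarrow> real \<Rightarrow> real" where
  "GEV g z = (if g = 0 then exp (- exp (- z))
              else if 1 + g * z \<le> 0 then (if g > 0 then 0 else 1)
              else exp (- ((1 + g * z) powr (- 1 / g))))"

definition gen_inv :: "(real \<Rightarrow> real) \<Rightarrow> real \<Rightarrow> real" where
  "gen_inv F tau = Inf {x. F x \<ge> tau}"

definition Mmax :: "(nat \<Rightarrow> 'a \<Rightarrow> real) \<Rightarrow> nat \<Rightarrow> 'a \<Rightarrow> real" where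
  "Mmax X m \<omega> = Max ((\<lambda>i. X i \<omega>) ` {1..m})"

definition strictly_stationary :: "'a measure \<Rightarrow> (nat \<Rightarrow> 'a \<Rightarrow> real) \<Rightarrow> bool" where
  "strictly_stationary M X \<longleftrightarrow>
     (\<forall>t. X t \<in> borel_measurable M) \<and>
     (\<forall>n h. distr M (Pi\<^sub>M {1..n} (\<lambda>_. borel)) (\<lambda>\<omega>. \<lambda>i\<in>{1..n}. X (i + h) \<omega>)
          = distr M (Pi\<^sub>M {1..n} (\<lambda>_. borel)) (\<lambda>\<omega>. \<lambda>i\<in>{1..n}. X i \<omega>))"

end

theory Submission
  imports Defs "HOL-Real_Asymp.Real_Asymp"
begin

text \<open>
  Write h = boxcox \<gamma>, H = H2 \<gamma> \<rho> and R s x = ((b (s x) - b s) / a s - h x) / A s, so that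
  R s \<rightarrow> H pointwise. Comparing the expansions at s and \<theta> s gives, for every y > 0 and
  A s, A (\<theta> s) nonzero, the exact identity
    R s (\<theta> y) - R s \<theta> = u s * h y + w s * R (\<theta> s) y,   u s = (a (\<theta> s) / a s - \<theta>^\<gamma>) / A s,
  with some factor w s about which nothing is known. As h and H are linearly independent, two
  values of y determine u s by Cramer's rule, and the functional equation
  H (\<theta> y) - H \<theta> = \<theta>^(\<gamma>+\<rho>) H y + \<theta>^\<gamma> boxcox \<rho> \<theta> h y identifies its limit as \<theta>^\<gamma> boxcox \<rho> \<theta>;
  this is the first expansion. The difference of the location constants is
  -A m R m \<theta> a m / a (\<theta> m), which gives the second expansion and shows that the normalisation
  (a (\<theta> m), b (\<theta> m)) is an affine reparametrisation z n \<rightarrow> z of the \<theta>-normalisation at m;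
  monotonicity of distribution functions and continuity of GEV \<gamma> then carry the limit law over.
\<close>

lemma has_real_derivative_boxcox:
  assumes "v > 0"
  shows "(boxcox g has_real_derivative v powr (g - 1)) (at v)"
proof (cases "g = 0")
  case True
  then have "boxcox g = ln" by (auto simp: boxcox_def)
  then show ?thesis using DERIV_ln_divide[OF assms] True assms
    by (simp add: powr_minus_divide)
next
  case False
  then have "boxcox g = (\<lambda>v. (v powr g - 1) / g)" by (auto simp: boxcox_def fun_eq_iff)
  moreover have "((\<lambda>v. (v powr g - 1) / g) has_real_derivative (g * v powr (g - 1) - 0) / g) (at v)"
    by (intro DERIV_cdivide DERIV_diff has_real_derivative_powr assms DERIV_const)
  ultimately show ?thesis using False by simp
qed

lemma interval_integral_powr_eq_boxcox:
  assumes "x > 0"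
  shows "(LBINT u=ereal 1..ereal x. u powr (g - 1)) = boxcox g x"
proof -
  have "(LBINT u=ereal 1..ereal x. u powr (g - 1)) = boxcox g x - boxcox g 1"
  proof (rule interval_integral_FTC_finite)
    show "continuous_on {min 1 x..max 1 x} (\<lambda>u. u powr (g - 1))"
      using assms by (intro continuous_intros) auto
    fix y assume "min 1 x \<le> y" "y \<le> max 1 x"
    then have "y > 0" using assms by auto
    then show "(boxcox g has_vector_derivative y powr (g - 1)) (at y within {min 1 x..max 1 x})"
      using has_real_derivative_boxcox has_real_derivative_iff_has_vector_derivative
        has_field_derivative_at_within by blast
  qed
  then show ?thesis by (simp add: boxcox_def)
qed

lemma boxcox_one [simp]: "boxcox g 1 = 0"
  by (simp add: boxcox_def)

lemma boxcox_eq_0_iff: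
  assumes "x > 0"
  shows "boxcox g x = 0 \<longleftrightarrow> x = 1"
proof (cases "g = 0")
  case False
  have "x powr g = 1 \<longleftrightarrow> g * ln x = 0"
    using assms by (metis exp_eq_one_iff ln_powr powr_def powr_gt_zero)
  then show ?thesis using False assms by (simp add: boxcox_def)
qed (use assms in \<open>simp add: boxcox_def\<close>)

lemma boxcox_mult:
  assumes "x > 0" "y > 0"
  shows "boxcox g (x * y) = x powr g * boxcox g y + boxcox g x"
  using assms by (auto simp: boxcox_def ln_mult powr_mult field_simps)

lemma H2_eq_integral_boxcox:
  assumes "x > 0"
  shows "H2 g r x = (LBINT v=ereal 1..ereal x. v powr (g - 1) * boxcox r v)"
  unfolding H2_def
proof (rule interval_integral_cong)
  fix v assume "v \<in> einterval (min (ereal 1) (ereal x)) (max (ereal 1) (ereal x))"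
  then have "v > 0" using assms by (auto simp: einterval_def min_def max_def split: if_splits)
  then show "v powr (g - 1) * (LBINT u=ereal 1..ereal v. u powr (r - 1)) = v powr (g - 1) * boxcox r v"
    by (simp add: interval_integral_powr_eq_boxcox)
qed

lemma H2_one [simp]: "H2 g r 1 = 0"
  by (simp add: H2_def)

lemma has_real_derivative_H2:
  assumes "y > 0"
  shows "(H2 g r has_real_derivative y powr (g - 1) * boxcox r y) (at y)"
proof -
  define lo where "lo = min 1 y / 2"
  define hi where "hi = max 1 y + 1"
  have lo: "lo > 0" "lo < y" "lo \<le> 1" and hi: "y < hi" "1 \<le> hi"
    using assms by (auto simp: lo_def hi_def min_def)
  have "continuous_on {lo..hi} (boxcox r)"
    using lo by (intro DERIV_continuous_on[where D="\<lambda>v. v powr (r - 1)"] has_real_derivative_boxcox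
        has_field_derivative_at_within) auto
  then have "continuous_on {lo..hi} (\<lambda>v. v powr (g - 1) * boxcox r v)"
    using lo by (intro continuous_intros) auto
  from interval_integral_FTC2[OF lo(3) hi(2) this, of y]
  have "((\<lambda>u. LBINT v=ereal 1..ereal u. v powr (g - 1) * boxcox r v) has_real_derivative
        y powr (g - 1) * boxcox r y) (at y)"
    using lo hi by (simp add: at_within_Icc_at has_real_derivative_iff_has_vector_derivative)
  then show ?thesis
    by (rule has_field_derivative_transform_within_open[where S="{0<..}"])
      (use assms H2_eq_integral_boxcox in auto)
qed

text \<open>Both sides vanish at \<open>y = 1\<close> and have the same derivative in \<open>y\<close>.\<close>
lemma H2_mult:
  assumes "x > 0" "y > 0"
  shows "H2 g r (x * y) - H2 g r x = x powr (g + r) * H2 g r y + x powr g * boxcox r x * boxcox g y"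
proof -
  define \<Phi> where "\<Phi> y = H2 g r (x * y) - H2 g r x - x powr (g + r) * H2 g r y
      - x powr g * boxcox r x * boxcox g y" for y
  have "(\<Phi> has_field_derivative 0) (at y within {0<..})" if "y > 0" for y
  proof -
    have xy: "x * y > 0" using assms that by simp
    have "((\<lambda>y. H2 g r (x * y)) has_real_derivative (x * y) powr (g - 1) * boxcox r (x * y) * x) (at y)"
      using DERIV_chain2[OF has_real_derivative_H2[OF xy] DERIV_cmult_Id[of x y]] by simp
    then have "(\<Phi> has_field_derivative
        (x * y) powr (g - 1) * boxcox r (x * y) * x - 0 - x powr (g + r) * (y powr (g - 1) * boxcox r y)
         - x powr g * boxcox r x * y powr (g - 1)) (at y)"
      unfolding \<Phi>_def
      by (intro DERIV_diff DERIV_cmult DERIV_const has_real_derivative_boxcox has_real_derivative_H2 that)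
    moreover have "(x * y) powr (g - 1) * boxcox r (x * y) * x
        = (x powr g * y powr (g - 1)) * (x powr r * boxcox r y + boxcox r x)"
      unfolding boxcox_mult[OF assms(1) that] using assms that
      by (simp add: powr_mult powr_diff field_simps)
    ultimately show ?thesis
      using has_field_derivative_at_within by (simp add: powr_add algebra_simps)
  qed
  then obtain c where "\<And>y. y \<in> {0<..} \<Longrightarrow> \<Phi> y = c"
    using has_field_derivative_zero_constant[of "{0<..}" \<Phi>] by auto
  moreover have "\<Phi> 1 = 0" by (simp add: \<Phi>_def)
  ultimately have "\<Phi> y = 0" using assms by force
  then show ?thesis by (simp add: \<Phi>_def)
qed

lemma H2_inverse:
  assumes "x > 0"
  shows "H2 g r x = - (x powr g * (x powr r * H2 g r (1 / x) + boxcox r x * boxcox g (1 / x)))"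
  using H2_mult[OF assms, of "1 / x" g r] assms by (simp add: powr_add algebra_simps)

text \<open>Otherwise \<open>boxcox g 2 * H2 g r y = boxcox g y * H2 g r 2\<close> for all \<open>y > 0\<close>; differentiating
  in \<open>y\<close> makes \<open>boxcox r\<close> constant.\<close>
lemma boxcox_H2_independent:
  "\<exists>y1 y2. y1 > 0 \<and> y2 > 0 \<and> boxcox g y1 * H2 g r y2 \<noteq> boxcox g y2 * H2 g r y1"
proof (rule ccontr)
  assume "\<not> ?thesis"
  then have dep: "boxcox g 2 * H2 g r y - boxcox g y * H2 g r 2 = 0" if "y > 0" for y
    using that by force
  have const: "boxcox g 2 * boxcox r y = H2 g r 2" if "y > 0" for y
  proof -
    have "((\<lambda>y. boxcox g 2 * H2 g r y - boxcox g y * H2 g r 2) has_real_derivative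
        boxcox g 2 * (y powr (g - 1) * boxcox r y) - y powr (g - 1) * H2 g r 2) (at y)"
      by (intro DERIV_diff DERIV_cmult has_real_derivative_H2 has_real_derivative_boxcox[THEN DERIV_cmult_right] that)
    then have "((\<lambda>y. 0) has_real_derivative
        boxcox g 2 * (y powr (g - 1) * boxcox r y) - y powr (g - 1) * H2 g r 2) (at y)"
      by (rule has_field_derivative_transform_within_open[where S="{0<..}"]) (use that dep in auto)
    then have "y powr (g - 1) * (boxcox g 2 * boxcox r y - H2 g r 2) = 0"
      using DERIV_const DERIV_unique by (fastforce simp: algebra_simps)
    then show ?thesis using that by simp
  qed
  have "H2 g r 2 = 0" using const[of 1] by simp
  then show False using const[of 2] boxcox_eq_0_iff[of 2] by simp
qed

lemma isCont_GEV: "isCont (GEV g) z"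
proof (cases "g = 0")
  case True
  then have "GEV g = (\<lambda>z. exp (- exp (- z)))" by (auto simp: GEV_def fun_eq_iff)
  then show ?thesis by (simp add: continuous_intros)
next
  case False
  define c :: real where "c = (if g > 0 then 0 else 1)"
  define \<psi> where "\<psi> y = (if y \<le> 0 then c else exp (- (y powr (- 1 / g))))" for y :: real
  have GEV_eq: "GEV g = \<psi> \<circ> (\<lambda>w. 1 + g * w)"
    using False by (auto simp: GEV_def \<psi>_def c_def fun_eq_iff)
  have "isCont \<psi> y" for y
  proof (cases y "0::real" rule: linorder_cases)
    case less
    have "\<forall>\<^sub>F v in nhds y. v < 0"
      using eventually_nhds_in_open[of "{..<0}" y] less by simp
    then have "\<forall>\<^sub>F v in nhds y. \<psi> v = c"
      by eventually_elim (simp add: \<psi>_def)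
    then show ?thesis by (simp add: isCont_cong)
  next
    case equal
    have "((\<lambda>v. exp (- (v powr (- 1 / g)))) \<longlongrightarrow> c) (at_right 0)"
    proof (cases "g > 0")
      case True
      then show ?thesis unfolding c_def by simp real_asymp
    next
      case False
      then have "g < 0" using \<open>g \<noteq> 0\<close> by simp
      then show ?thesis unfolding c_def by simp real_asymp
    qed
    then show ?thesis
      using isCont_If_ge[of 0 "\<lambda>_. c" "\<lambda>v. exp (- (v powr (- 1 / g)))"] equal
      unfolding \<psi>_def by simp
  next
    case greater
    have "\<forall>\<^sub>F v in nhds y. v > 0"
      using eventually_nhds_in_open[of "{0<..}" y] greater by simp
    then have "\<forall>\<^sub>F v in nhds y. \<psi> v = exp (- (v powr (- 1 / g)))"
      by eventually_elim (simp add: \<psi>_def)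
    moreover have "isCont (\<lambda>v. exp (- (v powr (- 1 / g)))) y"
      using greater by (intro continuous_intros) auto
    ultimately show ?thesis by (simp add: isCont_cong)
  qed
  then show ?thesis unfolding GEV_eq by (intro continuous_intros) auto
qed

lemma tendsto_mono_fun_compose:
  fixes f :: "'a \<Rightarrow> real \<Rightarrow> real"
  assumes mono: "\<And>n. mono (f n)"
    and pointwise: "\<And>x. ((\<lambda>n. f n x) \<longlongrightarrow> G x) F"
    and cont: "isCont G z"
    and zn: "(zn \<longlongrightarrow> z) F"
  shows "((\<lambda>n. f n (zn n)) \<longlongrightarrow> G z) F"
proof (rule tendstoI)
  fix e :: real assume "e > 0"
  then obtain d where "d > 0" and d: "\<And>w. dist w z < d \<Longrightarrow> dist (G w) (G z) < e / 2"
    using cont unfolding continuous_at_eps_delta by (meson half_gt_zero)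
  have "dist (z - d / 2) z < d" "dist (z + d / 2) z < d"
    using \<open>d > 0\<close> by (simp_all add: dist_real_def)
  then have G_lo: "dist (G (z - d / 2)) (G z) < e / 2" and G_hi: "dist (G (z + d / 2)) (G z) < e / 2"
    by (simp_all only: d)
  have "\<forall>\<^sub>F n in F. dist (f n (z - d / 2)) (G (z - d / 2)) < e / 2"
    and "\<forall>\<^sub>F n in F. dist (f n (z + d / 2)) (G (z + d / 2)) < e / 2"
    using \<open>e > 0\<close> by (intro tendstoD[OF pointwise], simp)+
  moreover have "\<forall>\<^sub>F n in F. dist (zn n) z < d / 2"
    using \<open>d > 0\<close> by (intro tendstoD[OF zn]) simp
  ultimately show "\<forall>\<^sub>F n in F. dist (f n (zn n)) (G z) < e"
  proof eventually_elim
    case (elim n)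
    then have "z - d / 2 \<le> zn n" "zn n \<le> z + d / 2"
      unfolding dist_real_def abs_less_iff by linarith+
    then have "f n (z - d / 2) \<le> f n (zn n)" "f n (zn n) \<le> f n (z + d / 2)"
      using monoD[OF mono] by blast+
    then show ?case
      using elim G_lo G_hi unfolding dist_real_def abs_less_iff by linarith
  qed
qed

lemma (in finite_measure) mono_measure_le:
  fixes f :: "'a \<Rightarrow> real"
  assumes "f \<in> borel_measurable M"
  shows "mono (\<lambda>y. measure M {\<omega> \<in> space M. f \<omega> \<le> y})"
proof (intro monoI finite_measure_mono)
  fix y :: real
  show "{\<omega> \<in> space M. f \<omega> \<le> y} \<in> sets M" using assms by measurable
qed auto

lemma borel_measurable_Mmax:
  assumes "\<And>i. X i \<in> borel_measurable M"
  shows "Mmax X j \<in> borel_measurable M"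
  unfolding Mmax_def[abs_def] using assms by (intro borel_measurable_Max) auto

locale second_order_erv =
  fixes a b A :: "real \<Rightarrow> real" and \<gamma> \<rho> :: real
  assumes a_pos: "\<And>s. a s > 0"
    and A_nonzero: "\<forall>\<^sub>F s in at_top. A s \<noteq> 0"
    and A_tendsto: "(A \<longlongrightarrow> 0) at_top"
    and second_order: "\<And>x. x > 0 \<Longrightarrow>
      ((\<lambda>s. (1 / A s) * ((b (s * x) - b s) / a s - boxcox \<gamma> x)) \<longlongrightarrow> H2 \<gamma> \<rho> x) at_top"
begin

lemma a_neq_0 [simp]: "a s \<noteq> 0"
  using a_pos[of s] by simp

definition so_remainder :: "real \<Rightarrow> real \<Rightarrow> real" where
  "so_remainder s x = (1 / A s) * ((b (s * x) - b s) / a s - boxcox \<gamma> x)"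

lemma so_remainder_tendsto:
  assumes "x > 0" "filterlim s at_top F"
  shows "((\<lambda>n. so_remainder (s n) x) \<longlongrightarrow> H2 \<gamma> \<rho> x) F"
  unfolding so_remainder_def by (rule filterlim_compose[OF second_order[OF assms(1)] assms(2)])

lemma eventually_A_nonzero:
  assumes "filterlim s at_top F"
  shows "\<forall>\<^sub>F n in F. A (s n) \<noteq> 0"
  using eventually_compose_filterlim[OF A_nonzero assms] .

lemma so_remainder_rescale:
  assumes "\<theta> > 0" "y > 0" "A s \<noteq> 0" "A (\<theta> * s) \<noteq> 0"
  shows "so_remainder s (\<theta> * y) - so_remainder s \<theta> =
    (a (\<theta> * s) / a s - \<theta> powr \<gamma>) / A s * boxcox \<gamma> y
    + a (\<theta> * s) / a s * A (\<theta> * s) / A s * so_remainder (\<theta> * s) y"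
proof -
  have "s * (\<theta> * y) = \<theta> * s * y" "s * \<theta> = \<theta> * s" by simp_all
  then show ?thesis
    using assms boxcox_mult[OF assms(1,2), of \<gamma>] unfolding so_remainder_def
    by (simp add: field_simps)
qed

lemma location_shift_eq:
  assumes "A s \<noteq> 0"
  shows "(b s + a s * boxcox \<gamma> \<theta> - b (\<theta> * s)) / a (\<theta> * s)
    = - (A s * so_remainder s \<theta> / (a (\<theta> * s) / a s))"
  using assms unfolding so_remainder_def by (simp add: field_simps mult.commute[of s])

lemma second_order_scale_ratio:
  assumes "\<theta> > 0" "filterlim s at_top F"
  shows "((\<lambda>n. (a (\<theta> * s n) / a (s n) - \<theta> powr \<gamma>) / A (s n)) \<longlongrightarrow> \<theta> powr \<gamma> * boxcox \<rho> \<theta>) F"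
proof -
  obtain y1 y2 where y: "y1 > 0" "y2 > 0"
    and det: "boxcox \<gamma> y1 * H2 \<gamma> \<rho> y2 - boxcox \<gamma> y2 * H2 \<gamma> \<rho> y1 \<noteq> 0"
    using boxcox_H2_independent by force
  have \<theta>s: "filterlim (\<lambda>n. \<theta> * s n) at_top F"
    using filterlim_tendsto_pos_mult_at_top[OF tendsto_const assms] .
  define u where "u n = (a (\<theta> * s n) / a (s n) - \<theta> powr \<gamma>) / A (s n)" for n
  define w where "w n = a (\<theta> * s n) / a (s n) * A (\<theta> * s n) / A (s n)" for n
  define E where "E y n = so_remainder (s n) (\<theta> * y) - so_remainder (s n) \<theta>" for y n
  define q where "q y n = so_remainder (\<theta> * s n) y" for y n
  define \<Delta> where "\<Delta> n = boxcox \<gamma> y1 * q y2 n - boxcox \<gamma> y2 * q y1 n" for n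
  have \<Delta>: "(\<Delta> \<longlongrightarrow> boxcox \<gamma> y1 * H2 \<gamma> \<rho> y2 - boxcox \<gamma> y2 * H2 \<gamma> \<rho> y1) F"
    unfolding \<Delta>_def q_def by (intro tendsto_intros so_remainder_tendsto \<theta>s y)
  have "\<forall>\<^sub>F n in F. u n = (E y1 n * q y2 n - E y2 n * q y1 n) / \<Delta> n"
    using eventually_A_nonzero[OF assms(2)] eventually_A_nonzero[OF \<theta>s]
      tendsto_imp_eventually_ne[OF \<Delta> det]
  proof eventually_elim
    case (elim n)
    have "E y n = u n * boxcox \<gamma> y + w n * q y n" if "y > 0" for y
      unfolding E_def u_def w_def q_def using so_remainder_rescale assms(1) that elim by simp
    then have "E y1 n * q y2 n - E y2 n * q y1 n = u n * \<Delta> n"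
      unfolding \<Delta>_def using y by (simp add: algebra_simps)
    then show ?case using elim by simp
  qed
  moreover have "((\<lambda>n. (E y1 n * q y2 n - E y2 n * q y1 n) / \<Delta> n) \<longlongrightarrow>
      ((H2 \<gamma> \<rho> (\<theta> * y1) - H2 \<gamma> \<rho> \<theta>) * H2 \<gamma> \<rho> y2 - (H2 \<gamma> \<rho> (\<theta> * y2) - H2 \<gamma> \<rho> \<theta>) * H2 \<gamma> \<rho> y1)
      / (boxcox \<gamma> y1 * H2 \<gamma> \<rho> y2 - boxcox \<gamma> y2 * H2 \<gamma> \<rho> y1)) F"
    unfolding E_def q_def using det assms(1) y
    by (intro tendsto_divide[OF _ \<Delta>] tendsto_intros so_remainder_tendsto \<theta>s assms(2)) auto
  moreover have "((H2 \<gamma> \<rho> (\<theta> * y1) - H2 \<gamma> \<rho> \<theta>) * H2 \<gamma> \<rho> y2 - (H2 \<gamma> \<rho> (\<theta> * y2) - H2 \<gamma> \<rho> \<theta>) * H2 \<gamma> \<rho> y1)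
      / (boxcox \<gamma> y1 * H2 \<gamma> \<rho> y2 - boxcox \<gamma> y2 * H2 \<gamma> \<rho> y1) = \<theta> powr \<gamma> * boxcox \<rho> \<theta>"
    unfolding H2_mult[OF assms(1) y(1)] H2_mult[OF assms(1) y(2)] using det
    by (simp add: field_simps)
  ultimately show ?thesis unfolding u_def using tendsto_cong by force
qed

lemma scale_ratio_tendsto:
  assumes "\<theta> > 0" "filterlim s at_top F"
  shows "((\<lambda>n. a (\<theta> * s n) / a (s n)) \<longlongrightarrow> \<theta> powr \<gamma>) F"
proof -
  have "\<forall>\<^sub>F n in F. a (\<theta> * s n) / a (s n)
      = \<theta> powr \<gamma> + A (s n) * ((a (\<theta> * s n) / a (s n) - \<theta> powr \<gamma>) / A (s n))"
    using eventually_A_nonzero[OF assms(2)] by eventually_elim simp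
  moreover have "((\<lambda>n. \<theta> powr \<gamma> + A (s n) * ((a (\<theta> * s n) / a (s n) - \<theta> powr \<gamma>) / A (s n)))
      \<longlongrightarrow> \<theta> powr \<gamma> + 0 * (\<theta> powr \<gamma> * boxcox \<rho> \<theta>)) F"
    by (intro tendsto_intros second_order_scale_ratio assms filterlim_compose[OF A_tendsto assms(2)])
  ultimately show ?thesis using tendsto_cong by force
qed

lemma scale_rate:
  assumes "\<theta> > 0" "filterlim s at_top F" "((\<lambda>n. \<kappa> n * A (s n)) \<longlongrightarrow> lam) F"
  shows "((\<lambda>n. \<kappa> n * (a (s n) * \<theta> powr \<gamma> / a (\<theta> * s n) - 1)) \<longlongrightarrow> - lam * boxcox \<rho> \<theta>) F"
proof -
  have "\<forall>\<^sub>F n in F. \<kappa> n * (a (s n) * \<theta> powr \<gamma> / a (\<theta> * s n) - 1)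
      = - (\<kappa> n * A (s n)) * ((a (\<theta> * s n) / a (s n) - \<theta> powr \<gamma>) / A (s n)) / (a (\<theta> * s n) / a (s n))"
    using eventually_A_nonzero[OF assms(2)] by eventually_elim (simp add: field_simps)
  moreover have "((\<lambda>n. - (\<kappa> n * A (s n)) * ((a (\<theta> * s n) / a (s n) - \<theta> powr \<gamma>) / A (s n))
      / (a (\<theta> * s n) / a (s n))) \<longlongrightarrow> - lam * (\<theta> powr \<gamma> * boxcox \<rho> \<theta>) / \<theta> powr \<gamma>) F"
    using assms(1) by (intro tendsto_intros assms second_order_scale_ratio scale_ratio_tendsto) auto
  ultimately show ?thesis using assms(1) tendsto_cong by force
qed

lemma location_rate:
  assumes "\<theta> > 0" "filterlim s at_top F" "((\<lambda>n. \<kappa> n * A (s n)) \<longlongrightarrow> lam) F"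
  shows "((\<lambda>n. \<kappa> n * ((b (s n) + a (s n) * boxcox \<gamma> \<theta> - b (\<theta> * s n)) / a (\<theta> * s n)))
    \<longlongrightarrow> lam * \<theta> powr \<rho> * H2 \<gamma> \<rho> (1 / \<theta>) + lam * boxcox \<rho> \<theta> * boxcox \<gamma> (1 / \<theta>)) F"
proof -
  have "\<forall>\<^sub>F n in F. \<kappa> n * ((b (s n) + a (s n) * boxcox \<gamma> \<theta> - b (\<theta> * s n)) / a (\<theta> * s n))
      = - (\<kappa> n * A (s n) * so_remainder (s n) \<theta> / (a (\<theta> * s n) / a (s n)))"
    using eventually_A_nonzero[OF assms(2)] by eventually_elim (simp add: location_shift_eq)
  moreover have "((\<lambda>n. - (\<kappa> n * A (s n) * so_remainder (s n) \<theta> / (a (\<theta> * s n) / a (s n))))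
      \<longlongrightarrow> - (lam * H2 \<gamma> \<rho> \<theta> / \<theta> powr \<gamma>)) F"
    using assms(1) by (intro tendsto_intros assms so_remainder_tendsto scale_ratio_tendsto) auto
  moreover have "- (lam * H2 \<gamma> \<rho> \<theta> / \<theta> powr \<gamma>)
      = lam * \<theta> powr \<rho> * H2 \<gamma> \<rho> (1 / \<theta>) + lam * boxcox \<rho> \<theta> * boxcox \<gamma> (1 / \<theta>)"
    using assms(1) by (subst H2_inverse) (auto simp: field_simps)
  ultimately show ?thesis using tendsto_cong by force
qed

lemma location_shift_tendsto:
  assumes "\<theta> > 0" "filterlim s at_top F"
  shows "((\<lambda>n. (b (s n) + a (s n) * boxcox \<gamma> \<theta> - b (\<theta> * s n)) / a (\<theta> * s n)) \<longlongrightarrow> 0) F"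
  using location_rate[OF assms, of "\<lambda>_. 1" 0] filterlim_compose[OF A_tendsto assms(2)] by simp

lemma tendsto_renormalised:
  fixes D :: "nat \<Rightarrow> real \<Rightarrow> real" and m :: "nat \<Rightarrow> nat"
  assumes mono: "\<And>j. mono (D j)"
    and "\<theta> > 0" and m: "filterlim m at_top sequentially" and "isCont G z"
    and limit: "\<And>z. (\<lambda>j. D j (a (real j) * \<theta> powr \<gamma> * z + (b (real j) + a (real j) * boxcox \<gamma> \<theta>)))
      \<longlonglongrightarrow> G z"
  shows "(\<lambda>n. D (m n) (a (\<theta> * real (m n)) * z + b (\<theta> * real (m n)))) \<longlonglongrightarrow> G z"
proof -
  define s where "s n = real (m n)" for n
  have s: "filterlim s at_top sequentially"
    unfolding s_def by (rule filterlim_compose[OF filterlim_real_sequentially m])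
  define f where "f n x = D (m n) (a (s n) * \<theta> powr \<gamma> * x + (b (s n) + a (s n) * boxcox \<gamma> \<theta>))" for n x
  define L where "L n = (b (s n) + a (s n) * boxcox \<gamma> \<theta> - b (\<theta> * s n)) / a (\<theta> * s n)" for n
  define zn where "zn n = a (\<theta> * s n) / a (s n) * (z - L n) / \<theta> powr \<gamma>" for n
  have "mono (f n)" for n
    unfolding f_def using a_pos[of "s n"] \<open>\<theta> > 0\<close>
    by (intro monoI monoD[OF mono]) (simp add: mult_left_mono)
  moreover have "(\<lambda>n. f n x) \<longlonglongrightarrow> G x" for x
    unfolding f_def s_def by (rule filterlim_compose[OF limit m])
  moreover have "zn \<longlonglongrightarrow> \<theta> powr \<gamma> * (z - 0) / \<theta> powr \<gamma>"
    unfolding zn_def L_def using \<open>\<theta> > 0\<close>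
    by (intro tendsto_intros scale_ratio_tendsto location_shift_tendsto s) auto
  ultimately have "(\<lambda>n. f n (zn n)) \<longlonglongrightarrow> G z"
    using \<open>\<theta> > 0\<close> by (intro tendsto_mono_fun_compose[OF _ _ \<open>isCont G z\<close>]) auto
  moreover have "a (s n) * \<theta> powr \<gamma> * zn n + (b (s n) + a (s n) * boxcox \<gamma> \<theta>)
      = a (\<theta> * s n) * z + b (\<theta> * s n)" for n
    unfolding zn_def L_def using \<open>\<theta> > 0\<close> by (simp add: field_simps)
  ultimately show ?thesis by (simp add: f_def s_def)
qed

end

theorem lemma2p2:
  fixes M :: "'a measure" and X :: "nat \<Rightarrow> 'a \<Rightarrow> real"
    and F a b A :: "real \<Rightarrow> real"
    and \<gamma> \<rho> \<theta> lam :: real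
    and m k :: "nat \<Rightarrow> nat"
  assumes "prob_space M"
    and stat: "strictly_stationary M X"
    and F_def: "\<And>x. F x = measure M {\<omega> \<in> space M. X 1 \<omega> \<le> x}"
    and F_cont: "continuous_on UNIV F"
    and rho: "\<rho> \<le> 0"
    and theta: "0 < \<theta>" "\<theta> \<le> 1"
    and b_def: "\<And>t. t > 1 \<Longrightarrow> b t = gen_inv F (exp (- 1 / t))"
    and a_pos: "\<And>s. a s > 0"
    and A_sign: "(\<forall>\<^sub>F s in at_top. A s > 0) \<or> (\<forall>\<^sub>F s in at_top. A s < 0)"
    and A_lim: "(A \<longlongrightarrow> 0) at_top"
    and second_order: "\<And>x. x > 0 \<Longrightarrow>
       ((\<lambda>s. (1 / A s) * ((b (s * x) - b s) / a s
              - (LBINT u=ereal 1..ereal x. u powr (\<gamma> - 1)))) \<longlongrightarrow> H2 \<gamma> \<rho> x) at_top"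
    and m_lim: "filterlim m at_top sequentially"
    and k_lim: "filterlim k at_top sequentially"
    and lam: "(\<lambda>n. sqrt (real (k n)) * A (real (m n))) \<longlonglongrightarrow> lam"
  shows
   "let a\<theta> = (\<lambda>t. a t * \<theta> powr \<gamma>);
        b\<theta> = (\<lambda>t. b t + a t * boxcox \<gamma> \<theta>)
    in ((\<lambda>n. sqrt (real (k n)) * (a\<theta> (real (m n)) / a (\<theta> * real (m n)) - 1)
              - (- lam * boxcox \<rho> \<theta>)) \<longlonglongrightarrow> 0)
     \<and> ((\<lambda>n. sqrt (real (k n)) * ((b\<theta> (real (m n)) - b (\<theta> * real (m n))) / a (\<theta> * real (m n)))
              - (lam * \<theta> powr \<rho> * H2 \<gamma> \<rho> (1 / \<theta>)
                 + lam * boxcox \<rho> \<theta> * (if \<gamma> = 0 then - ln \<theta> else (\<theta> powr (- \<gamma>) - 1) / \<gamma>)))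
           \<longlonglongrightarrow> 0)
     \<and> ((\<forall>z. (\<lambda>j. measure M {\<omega> \<in> space M. Mmax X j \<omega> \<le> a\<theta> (real j) * z + b\<theta> (real j)})
                 \<longlonglongrightarrow> GEV \<gamma> z)
        \<longrightarrow> (\<forall>z. (\<lambda>n. measure M {\<omega> \<in> space M.
                      Mmax X (m n) \<omega> \<le> a (\<theta> * real (m n)) * z + b (\<theta> * real (m n))})
                 \<longlonglongrightarrow> GEV \<gamma> z))"
proof -
  \<comment> \<open>From stationarity only the measurability of the X i is used, and from A_sign only that
    A is eventually nonzero.\<close>
  interpret prob_space M by fact
  interpret second_order_erv a b A \<gamma> \<rho>
  proof
    show "\<forall>\<^sub>F s in at_top. A s \<noteq> 0"
      using A_sign by (auto elim: eventually_mono)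
    show "((\<lambda>s. 1 / A s * ((b (s * x) - b s) / a s - boxcox \<gamma> x)) \<longlongrightarrow> H2 \<gamma> \<rho> x) at_top"
      if "x > 0" for x
      using second_order[OF that] by (simp add: interval_integral_powr_eq_boxcox[OF that])
  qed (use a_pos A_lim in auto)
  have m: "filterlim (\<lambda>n. real (m n)) at_top sequentially"
    by (rule filterlim_compose[OF filterlim_real_sequentially m_lim])
  have "boxcox \<gamma> (1 / \<theta>) = (if \<gamma> = 0 then - ln \<theta> else (\<theta> powr (- \<gamma>) - 1) / \<gamma>)"
    using theta by (simp add: boxcox_def ln_div powr_minus_divide powr_divide)
  moreover have mono: "mono (\<lambda>y. measure M {\<omega> \<in> space M. Mmax X j \<omega> \<le> y})" for j
    using stat by (intro mono_measure_le borel_measurable_Mmax) (simp add: strictly_stationary_def)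
  ultimately show ?thesis
    unfolding Let_def
    using LIM_zero[OF scale_rate[OF theta(1) m lam]] LIM_zero[OF location_rate[OF theta(1) m lam]]
      tendsto_renormalised[where D = "\<lambda>j y. measure M {\<omega> \<in> space M. Mmax X j \<omega> \<le> y}",
        OF mono theta(1) m_lim isCont_GEV]
    by auto
qed

end
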